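(* Let $m\ge2$ and $n\ge m$. For every real $\beta>0$, there is no proportional mechanism $(A,q)$ for the goods allocation problem over the set $\mathcal{C}=\mathbb{R}_{\ge0}^{m\times n}$ of general instances such that $\beta\cdot\min_{i\in[m]}v_i(A(v)_i)\ge\mathrm{OPT}(v)$ for every $v\in\mathcal{C}$.
   Context: Goods allocation: $m$ agents $[m]$, $n$ goods $[n]$; an instance is a matrix $v\in\mathbb{R}_{\ge0}^{m\times n}$, $v_{i,j}$ the value of agent $i$ for good $j$, $v_i(S)=\sum_{j\in S}v_{i,j}$. An allocation is a tuple of pairwise disjoint subsets of $[n]$ with union $[n]$. A mechanism $(A,q)$ over $\mathcal{I}$ assigns to each $v$ an allocation $A(v)$ and transfers $q(v)\in\mathbb{R}^m$ (written $A_i,q_i$); it is proportional if for every $v\in\mathcal{I}$ and $i\in[m]$: $v_i(A_i)-q_i\ge\frac1m\sum_{j\in[m]}(v_i(A_j)-q_j)$. $\mathrm{OPT}(v)=\max_X\min_{i\in[m]}v_i(X_i)$ over all allocations $X$ (optimal egalitarian welfare). *)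

theory Defs
  imports "HOL-Analysis.Analysis"
begin

text \<open>Agents are 0..m-1, goods are 0..n-1. An instance is a matrix
  v :: nat => nat => real, with v i j the value of agent i for good j;
  entries outside the index range are fixed to 0 so instances correspond
  exactly to nonnegative m x n matrices.\<close>

definition general_instances :: "nat \<Rightarrow> nat \<Rightarrow> (nat \<Rightarrow> nat \<Rightarrow> real) set" where
  "general_instances m n = {v. \<forall>i j. (i < m \<and> j < n \<longrightarrow> 0 \<le> v i j) \<and>
                                   (\<not> (i < m \<and> j < n) \<longrightarrow> v i j = 0)}"

definition val :: "(nat \<Rightarrow> nat \<Rightarrow> real) \<Rightarrow> nat \<Rightarrow> nat set \<Rightarrow> real" where
  "val v i S = (\<Sum>j\<in>S. v i j)"

definition is_allocation :: "nat \<Rightarrow> nat \<Rightarrow> (nat \<Rightarrow> nat set) \<Rightarrow> bool" where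
  "is_allocation m n X \<longleftrightarrow>
     (\<forall>i<m. X i \<subseteq> {..<n}) \<and>
     (\<forall>i<m. \<forall>k<m. i \<noteq> k \<longrightarrow> X i \<inter> X k = {}) \<and>
     (\<Union>i<m. X i) = {..<n}"

definition OPT :: "nat \<Rightarrow> nat \<Rightarrow> (nat \<Rightarrow> nat \<Rightarrow> real) \<Rightarrow> real" where
  "OPT m n v = Max ((\<lambda>X. Min ((\<lambda>i. val v i (X i)) ` {..<m}))
                     ` {X. is_allocation m n X \<and> (\<forall>i. i \<ge> m \<longrightarrow> X i = {})})"

definition is_mechanism ::
  "nat \<Rightarrow> nat \<Rightarrow> (nat \<Rightarrow> nat \<Rightarrow> real) set \<Rightarrow>
   ((nat \<Rightarrow> nat \<Rightarrow> real) \<Rightarrow> nat \<Rightarrow> nat set) \<Rightarrow> bool" where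
  "is_mechanism m n I A \<longleftrightarrow> (\<forall>v\<in>I. is_allocation m n (A v))"

definition proportional ::
  "nat \<Rightarrow> nat \<Rightarrow> (nat \<Rightarrow> nat \<Rightarrow> real) set \<Rightarrow>
   ((nat \<Rightarrow> nat \<Rightarrow> real) \<Rightarrow> nat \<Rightarrow> nat set) \<Rightarrow>
   ((nat \<Rightarrow> nat \<Rightarrow> real) \<Rightarrow> nat \<Rightarrow> real) \<Rightarrow> bool" where
  "proportional m n I A q \<longleftrightarrow>
     (\<forall>v\<in>I. \<forall>i<m. val v i (A v i) - q v i \<ge>
         (1 / real m) * (\<Sum>j<m. val v i (A v j) - q v j))"

end

theory Submission
  imports Defs
begin

text \<open>Let agent 0 value good 0 at 1 and good 1 at \<open>m\<^sup>2\<close>, and let each agent \<open>i \<in> {1..<m}\<close> value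
  only good \<open>i\<close>, at 1. Giving every agent its own good shows \<open>OPT \<ge> 1\<close>, so a mechanism with
  any finite approximation ratio must give every agent positive value. This forces good \<open>i\<close>
  to agent \<open>i\<close> for \<open>i \<ge> 1\<close>, so every agent gets value at most 1 and the welfare is at most
  \<open>m\<close>. On the other hand, summing the proportionality inequalities over all agents cancels
  the transfers and bounds the welfare from below by \<open>\<Sum>\<^sub>i v\<^sub>i([n]) / m = m + 1\<close>.\<close>

lemma val_allocation_sum:
  assumes "is_allocation m n X"
  shows "(\<Sum>j<m. val v i (X j)) = val v i {..<n}"
proof -
  have "finite (X j)" if "j < m" for j
    using assms that unfolding is_allocation_def by (meson finite_lessThan finite_subset)
  moreover have "X j \<inter> X k = {}" if "j < m" "k < m" "j \<noteq> k" for j k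
    using assms that unfolding is_allocation_def by blast
  ultimately have "sum (v i) (\<Union>j<m. X j) = (\<Sum>j<m. sum (v i) (X j))"
    by (intro sum.UNION_disjoint) auto
  then show ?thesis
    using assms unfolding is_allocation_def val_def by simp
qed

lemma proportional_welfare_ge:
  assumes "proportional m n I A q" and "v \<in> I" and "is_allocation m n (A v)"
  shows "(\<Sum>i<m. val v i {..<n}) / real m \<le> (\<Sum>i<m. val v i (A v i))"
proof (cases "m = 0")
  case False
  define Q where "Q = (\<Sum>j<m. q v j)"
  have "(val v i {..<n} - Q) / real m \<le> val v i (A v i) - q v i" if "i < m" for i
  proof -
    have "1 / real m * (\<Sum>j<m. val v i (A v j) - q v j) \<le> val v i (A v i) - q v i"
      using assms(1,2) that unfolding proportional_def by blast
    moreover have "(\<Sum>j<m. val v i (A v j) - q v j) = val v i {..<n} - Q"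
      using val_allocation_sum[OF assms(3)] by (simp add: sum_subtractf Q_def)
    ultimately show ?thesis
      by simp
  qed
  then have "(\<Sum>i<m. (val v i {..<n} - Q) / real m) \<le> (\<Sum>i<m. val v i (A v i) - q v i)"
    by (intro sum_mono) auto
  also have "\<dots> = (\<Sum>i<m. val v i (A v i)) - Q"
    by (simp add: sum_subtractf Q_def)
  also have "(\<Sum>i<m. (val v i {..<n} - Q) / real m) = (\<Sum>i<m. val v i {..<n}) / real m - Q"
    using False by (simp add: sum_divide_distrib[symmetric] sum_subtractf diff_divide_distrib)
  finally show ?thesis by simp
qed simp

lemma finite_allocations:
  "finite {X. is_allocation m n X \<and> (\<forall>i. i \<ge> m \<longrightarrow> X i = {})}"
proof (rule finite_subset)
  show "finite {X. \<forall>i. (i \<in> {..<m} \<longrightarrow> X i \<in> Pow {..<n}) \<and> (i \<notin> {..<m} \<longrightarrow> X i = {})}"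
    by (intro finite_set_of_finite_funs) auto
qed (auto simp: is_allocation_def)

lemma is_allocation_assignment:
  assumes "\<forall>j<n. g j < m"
  shows "is_allocation m n (\<lambda>i. {j. j < n \<and> g j = i})"
  using assms unfolding is_allocation_def by auto

lemma OPT_ge_assignment:
  assumes "\<forall>j<n. g j < m"
  shows "Min ((\<lambda>i. val v i {j. j < n \<and> g j = i}) ` {..<m}) \<le> OPT m n v"
  unfolding OPT_def
proof (rule Max_ge)
  show "finite ((\<lambda>X. Min ((\<lambda>i. val v i (X i)) ` {..<m})) `
          {X. is_allocation m n X \<and> (\<forall>i. i \<ge> m \<longrightarrow> X i = {})})"
    using finite_allocations by blast
  show "Min ((\<lambda>i. val v i {j. j < n \<and> g j = i}) ` {..<m}) \<in> (\<lambda>X. Min ((\<lambda>i. val v i (X i)) ` {..<m})) `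
          {X. is_allocation m n X \<and> (\<forall>i. i \<ge> m \<longrightarrow> X i = {})}"
    using is_allocation_assignment[OF assms] assms by (intro imageI) auto
qed

lemma approximation_positive_value:
  assumes "0 < \<beta>" and "0 < OPT m n v"
    and "OPT m n v \<le> \<beta> * Min ((\<lambda>i. val v i (X i)) ` {..<m})" and "i < m"
  shows "0 < val v i (X i)"
proof -
  have "0 < \<beta> * Min ((\<lambda>i. val v i (X i)) ` {..<m})"
    using assms(2,3) by linarith
  then have "0 < Min ((\<lambda>i. val v i (X i)) ` {..<m})"
    using assms(1) by (rule zero_less_mult_pos)
  also have "\<dots> \<le> val v i (X i)"
    using assms(4) by (intro Min_le) auto
  finally show ?thesis .
qed

definition hard_instance :: "nat \<Rightarrow> nat \<Rightarrow> nat \<Rightarrow> real" where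
  "hard_instance m i j =
     (if i = 0 then (if j = 0 then 1 else if j = 1 then real m ^ 2 else 0)
      else if i < m \<and> j = i then 1 else 0)"

lemma hard_instance_in_general_instances:
  assumes "2 \<le> m" and "m \<le> n"
  shows "hard_instance m \<in> general_instances m n"
  using assms unfolding general_instances_def hard_instance_def by auto

lemma val_hard_instance_agent0:
  assumes "finite S"
  shows "val (hard_instance m) 0 S = (if 0 \<in> S then 1 else 0) + (if 1 \<in> S then real m ^ 2 else 0)"
proof -
  have "val (hard_instance m) 0 S = (\<Sum>j\<in>S. (if j = 0 then 1 else 0) + (if j = 1 then real m ^ 2 else 0))"
    unfolding val_def hard_instance_def by (intro sum.cong) auto
  then show ?thesis
    using assms by (simp add: sum.distrib)
qed

lemma val_hard_instance_other:
  assumes "0 < i" and "i < m" and "finite S"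
  shows "val (hard_instance m) i S = (if i \<in> S then 1 else 0)"
proof -
  have "val (hard_instance m) i S = (\<Sum>j\<in>S. if j = i then 1 else 0)"
    unfolding val_def hard_instance_def using assms by (intro sum.cong) auto
  then show ?thesis
    using assms(3) by (simp add: sum.delta')
qed

lemma OPT_hard_instance_ge_1:
  assumes "2 \<le> m" and "m \<le> n"
  shows "1 \<le> OPT m n (hard_instance m)"
proof -
  define g :: "nat \<Rightarrow> nat" where "g j = (if j < m then j else 0)" for j
  have "val (hard_instance m) i {j. j < n \<and> g j = i} = 1" if "i < m" for i
    using assms that
    by (cases "i = 0") (auto simp: g_def val_hard_instance_agent0 val_hard_instance_other)
  then have "(\<lambda>i. val (hard_instance m) i {j. j < n \<and> g j = i}) ` {..<m} = (\<lambda>_. 1) ` {..<m}"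
    by (intro image_cong) simp_all
  also have "\<dots> = {1}"
    using assms by (simp add: image_constant_conv lessThan_empty_iff)
  finally have "Min ((\<lambda>i. val (hard_instance m) i {j. j < n \<and> g j = i}) ` {..<m}) = 1"
    by simp
  moreover have "\<forall>j<n. g j < m"
    using assms by (simp add: g_def)
  ultimately show ?thesis
    using OPT_ge_assignment[of n g m "hard_instance m"] by simp
qed

lemma total_value_hard_instance:
  assumes "2 \<le> m" and "m \<le> n"
  shows "(\<Sum>i<m. val (hard_instance m) i {..<n}) = real m ^ 2 + real m"
proof -
  have "{..<m} = insert 0 {1..<m}"
    using assms by auto
  then have "(\<Sum>i<m. val (hard_instance m) i {..<n})
      = val (hard_instance m) 0 {..<n} + (\<Sum>i\<in>{1..<m}. val (hard_instance m) i {..<n})"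
    by simp
  also have "(\<Sum>i\<in>{1..<m}. val (hard_instance m) i {..<n}) = (\<Sum>i\<in>{1..<m}. 1)"
    using assms by (intro sum.cong) (auto simp: val_hard_instance_other)
  finally show ?thesis
    using assms by (simp add: val_hard_instance_agent0 of_nat_diff)
qed

lemma welfare_hard_instance_le:
  assumes "2 \<le> m" and "is_allocation m n X"
    and positive: "\<forall>i<m. 0 < val (hard_instance m) i (X i)"
  shows "(\<Sum>i<m. val (hard_instance m) i (X i)) \<le> real m"
proof -
  have finite: "finite (X i)" if "i < m" for i
    using assms(2) that unfolding is_allocation_def by (meson finite_lessThan finite_subset)
  have "1 < m"
    using assms(1) by simp
  then have "0 < val (hard_instance m) 1 (X 1)"
    using positive by blast
  then have "1 \<in> X 1"
    using val_hard_instance_other[OF zero_less_one \<open>1 < m\<close> finite[OF \<open>1 < m\<close>]]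
    by (simp split: if_splits)
  moreover have "X 0 \<inter> X 1 = {}"
    using assms(1,2) unfolding is_allocation_def by auto
  ultimately have "1 \<notin> X 0"
    by blast
  then have "val (hard_instance m) i (X i) \<le> 1" if "i < m" for i
    using finite[OF that] that
    by (cases "i = 0") (simp_all add: val_hard_instance_agent0 val_hard_instance_other)
  then have "(\<Sum>i<m. val (hard_instance m) i (X i)) \<le> (\<Sum>i<m. 1)"
    by (intro sum_mono) simp
  then show ?thesis
    by simp
qed

theorem mainTheorem8:
  fixes m n :: nat and \<beta> :: real
  assumes "m \<ge> 2" and "n \<ge> m" and "\<beta> > 0"
  shows "\<not> (\<exists>A q. is_mechanism m n (general_instances m n) A \<and>
               proportional m n (general_instances m n) A q \<and>
               (\<forall>v\<in>general_instances m n.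
                  \<beta> * Min ((\<lambda>i. val v i (A v i)) ` {..<m}) \<ge> OPT m n v))"
proof
  assume "\<exists>A q. is_mechanism m n (general_instances m n) A \<and>
               proportional m n (general_instances m n) A q \<and>
               (\<forall>v\<in>general_instances m n.
                  \<beta> * Min ((\<lambda>i. val v i (A v i)) ` {..<m}) \<ge> OPT m n v)"
  then obtain A q where mechanism: "is_mechanism m n (general_instances m n) A"
    and proportionality: "proportional m n (general_instances m n) A q"
    and approx: "\<forall>v\<in>general_instances m n. \<beta> * Min ((\<lambda>i. val v i (A v i)) ` {..<m}) \<ge> OPT m n v"
    by blast
  define v where "v = hard_instance m"
  have v: "v \<in> general_instances m n"
    using assms hard_instance_in_general_instances v_def by blast
  have alloc: "is_allocation m n (A v)"
    using mechanism v unfolding is_mechanism_def by blast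
  have "0 < OPT m n v"
    using OPT_hard_instance_ge_1[OF assms(1,2)] unfolding v_def by linarith
  then have "\<forall>i<m. 0 < val v i (A v i)"
    using approximation_positive_value[OF \<open>\<beta> > 0\<close>] approx v by blast
  then have "(\<Sum>i<m. val v i (A v i)) \<le> real m"
    using welfare_hard_instance_le[OF assms(1) alloc] unfolding v_def by blast
  moreover have "(real m ^ 2 + real m) / real m \<le> (\<Sum>i<m. val v i (A v i))"
    using proportional_welfare_ge[OF proportionality v alloc] total_value_hard_instance[OF assms(1,2)]
    unfolding v_def by simp
  moreover have "(real m ^ 2 + real m) / real m = real m + 1"
    using assms(1) by (simp add: power2_eq_square field_simps)
  ultimately show False by simp
qed

end
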